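(* Let $X$ and $Y$ be nonempty sets with $\operatorname{card} Y\ge 3$, and let $\mathcal P$ be a nonempty collection of subsets of $X$. Define the binary relation $\hat{\mathcal P}$ on $Y^X$ by declaring $f\,\hat{\mathcal P}\,g$ if and only if $\{x\in X\mid f(x)=g(x)\}\in\mathcal P$. Then $\mathcal P$ is a filter on $X$ if and only if $\hat{\mathcal P}$ is a nontrivial equivalence relation on $Y^X$.
   Context: Let $X$ be a nonempty set. A nonempty collection $\mathcal P$ of subsets of $X$ is a filter on $X$ if it satisfies: (F0) for every $n\ge 1$ and all $A_1,\dots,A_n\in\mathcal P$, $A_1\cap\cdots\cap A_n\neq\emptyset$; (F1) if $A\supseteq B$ and $B\in\mathcal P$ then $A\in\mathcal P$; (F2) for all $A,B\in\mathcal P$ there is $C\in\mathcal P$ with $C\subseteq A\cap B$. $Y^X$ denotes the set of all functions $X\to Y$. An equivalence relation on a set $S$ is called nontrivial if it is not the total relation $S\times S$ (i.e. not all pairs of elements are related). *)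

theory Defs
  imports Main "HOL-Library.FuncSet"
begin

definition is_filter_on :: "'a set \<Rightarrow> 'a set set \<Rightarrow> bool" where
  "is_filter_on X P \<longleftrightarrow>
     P \<noteq> {} \<and> (\<forall>A\<in>P. A \<subseteq> X) \<and>
     (\<forall>n\<ge>1. \<forall>A::nat \<Rightarrow> 'a set. (\<forall>i<n. A i \<in> P) \<longrightarrow> (\<Inter>i<n. A i) \<noteq> {}) \<and>
     (\<forall>A B. A \<subseteq> X \<and> B \<subseteq> A \<and> B \<in> P \<longrightarrow> A \<in> P) \<and>
     (\<forall>A\<in>P. \<forall>B\<in>P. \<exists>C\<in>P. C \<subseteq> A \<inter> B)"

definition hatP :: "'a set \<Rightarrow> 'b set \<Rightarrow> 'a set set \<Rightarrow> (('a \<Rightarrow> 'b) \<times> ('a \<Rightarrow> 'b)) set" where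
  "hatP X Y P = {(f, g). f \<in> X \<rightarrow>\<^sub>E Y \<and> g \<in> X \<rightarrow>\<^sub>E Y \<and> {x\<in>X. f x = g x} \<in> P}"

end

theory Submission
  imports Defs
begin

text \<open>If \<open>P\<close> is a filter, the agreement set of \<open>f\<close> and \<open>h\<close> contains the intersection of
  the agreement sets of \<open>f, g\<close> and of \<open>g, h\<close>, so transitivity follows from (F1) and (F2);
  two constant functions with different values agree nowhere, which (F0) forbids.
  Conversely, given distinct values \<open>a, b, c\<close> and sets \<open>A, B \<subseteq> X\<close>, let \<open>f\<close> be \<open>a\<close> on \<open>A\<close>
  and \<open>b\<close> elsewhere, \<open>g\<close> constantly \<open>a\<close>, and \<open>h\<close> be \<open>a\<close> on \<open>B\<close> and \<open>c\<close> elsewhere: then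
  \<open>f, g\<close> agree on \<open>A\<close>, \<open>g, h\<close> on \<open>B\<close>, and \<open>f, h\<close> exactly on \<open>A \<inter> B\<close>. Transitivity and
  symmetry thus make \<open>P\<close> closed under intersections and supersets, and nontriviality
  excludes \<open>{} \<in> P\<close>.\<close>

lemma hatP_iff:
  "(f, g) \<in> hatP X Y P \<longleftrightarrow> f \<in> X \<rightarrow>\<^sub>E Y \<and> g \<in> X \<rightarrow>\<^sub>E Y \<and> {x\<in>X. f x = g x} \<in> P"
  by (simp add: hatP_def)

lemma obtain_three_distinct:
  assumes "infinite Y \<or> card Y \<ge> 3"
  obtains a b c where "a \<in> Y" "b \<in> Y" "c \<in> Y" "a \<noteq> b" "b \<noteq> c" "a \<noteq> c"
proof -
  obtain T where "T \<subseteq> Y" "card T = 3"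
    using assms infinite_arbitrarily_large obtain_subset_with_card_n by metis
  then obtain a b c where "T = {a, b, c}" "a \<noteq> b" "b \<noteq> c" "a \<noteq> c"
    by (metis card_3_iff)
  with \<open>T \<subseteq> Y\<close> show ?thesis
    using that by blast
qed

lemma is_filter_on_upward_closed:
  assumes "is_filter_on X P" "A \<subseteq> X" "B \<subseteq> A" "B \<in> P"
  shows "A \<in> P"
  using assms unfolding is_filter_on_def by (elim conjE) (rule mp, erule spec2, blast)

lemma is_filter_on_directed:
  assumes "is_filter_on X P" "A \<in> P" "B \<in> P"
  obtains C where "C \<in> P" "C \<subseteq> A \<inter> B"
  using assms unfolding is_filter_on_def by (elim conjE) metis

lemma is_filter_on_carrier_mem:
  assumes "is_filter_on X P"
  shows "X \<in> P"
proof -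
  obtain A where "A \<in> P" "A \<subseteq> X"
    using assms unfolding is_filter_on_def by (elim conjE) blast
  then show ?thesis
    using is_filter_on_upward_closed[OF assms] by blast
qed

lemma is_filter_on_empty_not_mem:
  assumes "is_filter_on X P"
  shows "{} \<notin> P"
proof
  assume "{} \<in> P"
  have "\<forall>n\<ge>1. \<forall>A :: nat \<Rightarrow> 'a set. (\<forall>i<n. A i \<in> P) \<longrightarrow> (\<Inter>i<n. A i) \<noteq> {}"
    using assms unfolding is_filter_on_def by (elim conjE)
  then have "(\<Inter>i<Suc 0. {}) \<noteq> ({} :: 'a set)"
    using \<open>{} \<in> P\<close> by (metis le_refl One_nat_def less_Suc0)
  then show False
    by (simp add: lessThan_Suc)
qed

lemma is_filter_on_imp_equiv_hatP:
  assumes "is_filter_on X P"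
  shows "equiv (X \<rightarrow>\<^sub>E Y) (hatP X Y P)"
proof (rule equivI)
  show "refl_on (X \<rightarrow>\<^sub>E Y) (hatP X Y P)"
    using is_filter_on_carrier_mem[OF assms] by (auto simp: refl_on_def hatP_def)
  show "sym (hatP X Y P)"
    by (auto simp: sym_def hatP_def eq_commute)
  show "trans (hatP X Y P)"
  proof (rule transI)
    fix f g h
    assume fg: "(f, g) \<in> hatP X Y P" and gh: "(g, h) \<in> hatP X Y P"
    then have "{x\<in>X. f x = g x} \<in> P" "{x\<in>X. g x = h x} \<in> P"
      by (simp_all add: hatP_iff)
    then obtain C where "C \<in> P" "C \<subseteq> {x\<in>X. f x = g x} \<inter> {x\<in>X. g x = h x}"
      by (rule is_filter_on_directed[OF assms])
    note \<open>C \<subseteq> _\<close>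
    also have "{x\<in>X. f x = g x} \<inter> {x\<in>X. g x = h x} \<subseteq> {x\<in>X. f x = h x}"
      by auto
    finally have "{x\<in>X. f x = h x} \<in> P"
      by (rule is_filter_on_upward_closed[OF assms Collect_restrict _ \<open>C \<in> P\<close>])
    with fg gh show "(f, h) \<in> hatP X Y P"
      by (simp add: hatP_iff)
  qed
  show "hatP X Y P \<subseteq> (X \<rightarrow>\<^sub>E Y) \<times> (X \<rightarrow>\<^sub>E Y)"
    by (auto simp: hatP_def)
qed

lemma is_filter_on_imp_hatP_nontrivial:
  assumes "is_filter_on X P" and "a \<in> Y" "b \<in> Y" "a \<noteq> b"
  shows "hatP X Y P \<noteq> (X \<rightarrow>\<^sub>E Y) \<times> (X \<rightarrow>\<^sub>E Y)"
proof
  assume "hatP X Y P = (X \<rightarrow>\<^sub>E Y) \<times> (X \<rightarrow>\<^sub>E Y)"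
  then have "(\<lambda>x\<in>X. a, \<lambda>x\<in>X. b) \<in> hatP X Y P"
    using assms(2,3) by auto
  moreover have "{x\<in>X. (\<lambda>x\<in>X. a) x = (\<lambda>x\<in>X. b) x} = {}"
    using assms(4) by auto
  ultimately have "{} \<in> P"
    by (simp only: hatP_iff)
  with is_filter_on_empty_not_mem[OF assms(1)] show False ..
qed

lemma agreement_sets_triple:
  assumes "a \<in> Y" "b \<in> Y" "c \<in> Y" "a \<noteq> b" "b \<noteq> c" "a \<noteq> c"
    and "A \<subseteq> X" "B \<subseteq> X"
  obtains f g h where "f \<in> X \<rightarrow>\<^sub>E Y" "g \<in> X \<rightarrow>\<^sub>E Y" "h \<in> X \<rightarrow>\<^sub>E Y"
    and "{x\<in>X. f x = g x} = A" "{x\<in>X. g x = h x} = B" "{x\<in>X. f x = h x} = A \<inter> B"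
proof
  show "(\<lambda>x\<in>X. if x \<in> A then a else b) \<in> X \<rightarrow>\<^sub>E Y" "(\<lambda>x\<in>X. a) \<in> X \<rightarrow>\<^sub>E Y"
    "(\<lambda>x\<in>X. if x \<in> B then a else c) \<in> X \<rightarrow>\<^sub>E Y"
    using assms(1-3) by auto
qed (use assms in auto)

lemma equiv_hatP_Int_mem:
  assumes "equiv (X \<rightarrow>\<^sub>E Y) (hatP X Y P)"
    and "a \<in> Y" "b \<in> Y" "c \<in> Y" "a \<noteq> b" "b \<noteq> c" "a \<noteq> c"
    and "A \<in> P" "B \<in> P" "\<forall>A\<in>P. A \<subseteq> X"
  shows "A \<inter> B \<in> P"
proof -
  have "A \<subseteq> X" "B \<subseteq> X"
    using assms(8-10) by auto
  then obtain f g h where "f \<in> X \<rightarrow>\<^sub>E Y" "g \<in> X \<rightarrow>\<^sub>E Y" "h \<in> X \<rightarrow>\<^sub>E Y"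
    and "{x\<in>X. f x = g x} = A" "{x\<in>X. g x = h x} = B" "{x\<in>X. f x = h x} = A \<inter> B"
    by (rule agreement_sets_triple[OF assms(2-7)])
  with assms(8,9) have "(f, g) \<in> hatP X Y P" "(g, h) \<in> hatP X Y P"
    by (simp_all add: hatP_iff)
  then have "(f, h) \<in> hatP X Y P"
    using assms(1) unfolding equiv_def by (blast elim: transE)
  with \<open>{x\<in>X. f x = h x} = A \<inter> B\<close> show ?thesis
    by (simp add: hatP_iff)
qed

lemma equiv_hatP_upward_closed:
  assumes "equiv (X \<rightarrow>\<^sub>E Y) (hatP X Y P)"
    and "a \<in> Y" "b \<in> Y" "c \<in> Y" "a \<noteq> b" "b \<noteq> c" "a \<noteq> c"
    and "A \<subseteq> X" "B \<subseteq> A" "B \<in> P"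
  shows "A \<in> P"
proof -
  have "B \<subseteq> X"
    using assms(8,9) by blast
  with assms(8) obtain f g h where "f \<in> X \<rightarrow>\<^sub>E Y" "g \<in> X \<rightarrow>\<^sub>E Y" "h \<in> X \<rightarrow>\<^sub>E Y"
    and "{x\<in>X. f x = g x} = A" "{x\<in>X. g x = h x} = B" "{x\<in>X. f x = h x} = A \<inter> B"
    by (rule agreement_sets_triple[OF assms(2-7)])
  moreover have "A \<inter> B = B"
    using assms(9) by blast
  ultimately have "(f, h) \<in> hatP X Y P" "(h, g) \<in> hatP X Y P"
    using assms(10) by (auto simp: hatP_iff eq_commute)
  then have "(f, g) \<in> hatP X Y P"
    using assms(1) unfolding equiv_def by (blast elim: transE)
  with \<open>{x\<in>X. f x = g x} = A\<close> show ?thesis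
    by (simp add: hatP_iff)
qed

lemma equiv_hatP_carrier_mem:
  assumes "equiv (X \<rightarrow>\<^sub>E Y) (hatP X Y P)" and "a \<in> Y"
  shows "X \<in> P"
proof -
  have "(\<lambda>x\<in>X. a) \<in> X \<rightarrow>\<^sub>E Y"
    using assms(2) by auto
  then have "(\<lambda>x\<in>X. a, \<lambda>x\<in>X. a) \<in> hatP X Y P"
    using assms(1) by (auto simp: equiv_def refl_on_def)
  then show ?thesis
    by (simp add: hatP_iff)
qed

lemma Inter_lessThan_mem:
  fixes n :: nat
  assumes "X \<in> P" and "\<And>A B. A \<in> P \<Longrightarrow> B \<in> P \<Longrightarrow> A \<inter> B \<in> P"
    and "\<forall>i<n. A i \<in> P"
  shows "X \<inter> (\<Inter>i<n. A i) \<in> P"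
  using assms(3)
proof (induction n)
  case (Suc n)
  then have "X \<inter> (\<Inter>i<n. A i) \<inter> A n \<in> P"
    using assms(2) by simp
  then show ?case
    by (simp add: lessThan_Suc Int_ac)
qed (use assms(1) in simp)

lemma equiv_hatP_imp_is_filter_on:
  assumes equiv: "equiv (X \<rightarrow>\<^sub>E Y) (hatP X Y P)"
    and nontrivial: "hatP X Y P \<noteq> (X \<rightarrow>\<^sub>E Y) \<times> (X \<rightarrow>\<^sub>E Y)"
    and abc: "a \<in> Y" "b \<in> Y" "c \<in> Y" "a \<noteq> b" "b \<noteq> c" "a \<noteq> c"
    and nonempty: "P \<noteq> {}" and sub: "\<forall>A\<in>P. A \<subseteq> X"
  shows "is_filter_on X P"
proof -
  note up = equiv_hatP_upward_closed[OF equiv abc]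
  note Int = equiv_hatP_Int_mem[OF equiv abc _ _ sub]
  have "{} \<notin> P"
  proof
    assume "{} \<in> P"
    then have "A \<in> P" if "A \<subseteq> X" for A
      using up[OF that empty_subsetI] by blast
    then have "hatP X Y P = (X \<rightarrow>\<^sub>E Y) \<times> (X \<rightarrow>\<^sub>E Y)"
      by (auto simp: hatP_def)
    with nontrivial show False ..
  qed
  have finite_Inter: "(\<Inter>i<n. A i) \<noteq> {}" if "\<forall>i<n. A i \<in> P" for n :: nat and A
  proof -
    have "X \<inter> (\<Inter>i<n. A i) \<in> P"
      using Inter_lessThan_mem[OF equiv_hatP_carrier_mem[OF equiv \<open>a \<in> Y\<close>] Int that] .
    with \<open>{} \<notin> P\<close> show ?thesis
      by (metis Int_empty_right)
  qed
  show ?thesis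
    unfolding is_filter_on_def
  proof (intro conjI)
    show "\<forall>n\<ge>1::nat. \<forall>A. (\<forall>i<n. A i \<in> P) \<longrightarrow> (\<Inter>i<n. A i) \<noteq> {}"
      using finite_Inter by blast
    show "\<forall>A B. A \<subseteq> X \<and> B \<subseteq> A \<and> B \<in> P \<longrightarrow> A \<in> P"
      using up by blast
    show "\<forall>A\<in>P. \<forall>B\<in>P. \<exists>C\<in>P. C \<subseteq> A \<inter> B"
      using Int by blast
  qed (fact nonempty sub)+
qed

theorem mainTheorem1:
  fixes X :: "'a set" and Y :: "'b set" and P :: "'a set set"
  assumes "X \<noteq> {}" and "Y \<noteq> {}"
    and "infinite Y \<or> card Y \<ge> 3"
    and "P \<noteq> {}" and "\<forall>A\<in>P. A \<subseteq> X"
  shows "is_filter_on X P \<longleftrightarrow>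
           (equiv (X \<rightarrow>\<^sub>E Y) (hatP X Y P) \<and>
            hatP X Y P \<noteq> (X \<rightarrow>\<^sub>E Y) \<times> (X \<rightarrow>\<^sub>E Y))"
proof -
  obtain a b c where abc: "a \<in> Y" "b \<in> Y" "c \<in> Y" "a \<noteq> b" "b \<noteq> c" "a \<noteq> c"
    using obtain_three_distinct[OF assms(3)] by metis
  show ?thesis
  proof
    assume "is_filter_on X P"
    then show "equiv (X \<rightarrow>\<^sub>E Y) (hatP X Y P) \<and> hatP X Y P \<noteq> (X \<rightarrow>\<^sub>E Y) \<times> (X \<rightarrow>\<^sub>E Y)"
      by (intro conjI is_filter_on_imp_equiv_hatP is_filter_on_imp_hatP_nontrivial[OF _ abc(1,2,4)])
  next
    assume "equiv (X \<rightarrow>\<^sub>E Y) (hatP X Y P) \<and> hatP X Y P \<noteq> (X \<rightarrow>\<^sub>E Y) \<times> (X \<rightarrow>\<^sub>E Y)"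
    then show "is_filter_on X P"
      by (elim conjE) (rule equiv_hatP_imp_is_filter_on[OF _ _ abc assms(4,5)])
  qed
qed

end
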